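(* Assume the setting described in the context (including the assumption on $K_1$). Let $\mathbb X_L$ be a Banach space with a continuous embedding $\mathbb X_L\subset\mathbb X_A$. Let $0<\xi<\theta<1$, $\delta,\varrho>0$, $c_r\ge c_l>0$ and $C_D>c_D>1$. Suppose there is a continuous embedding $(\mathbb X_A,K_1)_{\xi,1}\subset\mathbb X_L$. Let $x\in\mathbb X$ with $x\in(\mathbb X_A,K_1)_{\theta,\infty}$ and $\|x\|_{(\mathbb X_A,K_1)_{\theta,\infty}}\le\varrho$, let $g^\delta\in\mathbb Y$ with $\|g^\delta-Ax\|_{\mathbb Y}\le\delta$, let $\alpha>0$ and $\hat x_\alpha\in R_\alpha(g^\delta)$. Then there is a constant $C>0$ independent of $x,\delta,\varrho,g^\delta$ such that whenever either $$c_l\varrho^{-\frac{u-1}{\theta}}\delta^{\frac{(1-\theta)(u-1)+\theta}{\theta}}\le\alpha\le c_r\varrho^{-\frac{u-1}{\theta}}\delta^{\frac{(1-\theta)(u-1)+\theta}{\theta}}\quad\text{or}\quad c_D\delta\le\|g^\delta-A\hat x_\alpha\|_{\mathbb Y}\le C_D\delta,$$ we have $x-\hat x_\alpha\in\mathbb X_L$ and $\|x-\hat x_\alpha\|_{\mathbb X_L}\le C\varrho^{\xi/\theta}\delta^{1-\xi/\theta}$.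
   Context: Banach-space setting: $\mathbb X$, $\mathbb X_A$ are real Banach spaces with a continuous dense embedding $\mathbb X\subset\mathbb X_A$; $\mathbb Y$ is a real Hilbert space; $A:\mathbb X_A\to\mathbb Y$ is bounded linear and there is $M\ge1$ with $\frac1M\|x\|_{\mathbb X_A}\le\|Ax\|_{\mathbb Y}\le M\|x\|_{\mathbb X_A}$ for all $x\in\mathbb X_A$ (we also write $A$ for its restriction to $\mathbb X$). Fix $u\in(1,\infty)$ and $\mathcal R(x):=\frac1u\|x\|_{\mathbb X}^u$ on $\mathbb X$. If $\mathbb X$ is not reflexive, assume there is a topology $\tau$ on $\mathbb X$ making it a locally convex Hausdorff space in which the sublevel sets of $\mathcal R$ are $\tau$-compact and $A|_{\mathbb X}$ is $\tau$-to-weak continuous (if $\mathbb X$ is reflexive this holds with $\tau$ the weak topology). For $\alpha>0$, $g\in\mathbb Y$: $T_\alpha(x,g):=\frac1{2\alpha}\|g-Ax\|_{\mathbb Y}^2+\mathcal R(x)$, $R_\alpha(g):=\operatorname{argmin}_{x\in\mathbb X}T_\alpha(x,g)$. For $\nu\ge0$, $\varrho_\nu(x):=\sup\{\alpha^{-\nu}\|Ax-Ax_\alpha\|_{\mathbb Y}:\alpha>0,\ x_\alpha\in R_\alpha(Ax)\}$ for $x\in\mathbb X$, and $K_1:=\{x\in\mathbb X:\varrho_1(x)<\infty\}$. Assumption on $K_1$: $K_1$ is a vector space carrying a quasi-norm $\|\cdot\|_{\mathrm{lin}}$ under which it is complete (a quasi-Banach space), and $\frac1M\varrho_1(x)\le\|x\|_{\mathrm{lin}}^{u-1}\le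 M\varrho_1(x)$ for all $x\in K_1$. Real interpolation: for a quasi-normed space $\mathbb X_S\subset\mathbb X_A$ and $x\in\mathbb X_A$, $t>0$, let $K(x,t):=\inf_{z\in\mathbb X_S}(\|x-z\|_{\mathbb X_A}+t\|z\|_{\mathbb X_S})$. For $\theta\in(0,1)$, $(\mathbb X_A,\mathbb X_S)_{\theta,\infty}$ consists of $x\in\mathbb X_A$ with $\|x\|_{\theta,\infty}:=\sup_{t>0}t^{-\theta}K(x,t)<\infty$, and for $q\in(0,\infty)$, $(\mathbb X_A,\mathbb X_S)_{\theta,q}$ consists of $x\in\mathbb X_A$ with $\|x\|_{\theta,q}:=\big(\int_0^\infty(t^{-\theta}K(x,t))^q\frac{dt}{t}\big)^{1/q}<\infty$. *)

theory Defs
  imports "HOL-Analysis.Analysis"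
begin

text \<open>A (complete) normed space realised as a linear subspace S of the ambient
  space X_A, carrying its own norm n.\<close>

definition normed_subspace :: "'a::real_vector set \<Rightarrow> ('a \<Rightarrow> real) \<Rightarrow> bool" where
  "normed_subspace S n \<longleftrightarrow> subspace S \<and>
     (\<forall>x\<in>S. 0 \<le> n x \<and> (n x = 0 \<longleftrightarrow> x = 0)) \<and>
     (\<forall>c. \<forall>x\<in>S. n (c *\<^sub>R x) = \<bar>c\<bar> * n x) \<and>
     (\<forall>x\<in>S. \<forall>y\<in>S. n (x + y) \<le> n x + n y)"

definition complete_wrt :: "'a::real_vector set \<Rightarrow> ('a \<Rightarrow> real) \<Rightarrow> bool" where
  "complete_wrt S n \<longleftrightarrow> (\<forall>f. (\<forall>k. f k \<in> S) \<and>
      (\<forall>e>0. \<exists>N. \<forall>i\<ge>N. \<forall>j\<ge>N. n (f i - f j) < e) \<longrightarrow>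
      (\<exists>l\<in>S. (\<lambda>k. n (f k - l)) \<longlonglongrightarrow> 0))"

definition banach_subspace :: "'a::real_vector set \<Rightarrow> ('a \<Rightarrow> real) \<Rightarrow> bool" where
  "banach_subspace S n \<longleftrightarrow> normed_subspace S n \<and> complete_wrt S n"

definition quasi_normed_subspace :: "'a::real_vector set \<Rightarrow> ('a \<Rightarrow> real) \<Rightarrow> bool" where
  "quasi_normed_subspace S n \<longleftrightarrow> subspace S \<and>
     (\<forall>x\<in>S. 0 \<le> n x \<and> (n x = 0 \<longleftrightarrow> x = 0)) \<and>
     (\<forall>c. \<forall>x\<in>S. n (c *\<^sub>R x) = \<bar>c\<bar> * n x) \<and>
     (\<exists>K\<ge>1. \<forall>x\<in>S. \<forall>y\<in>S. n (x + y) \<le> K * (n x + n y))"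

definition quasi_banach_subspace :: "'a::real_vector set \<Rightarrow> ('a \<Rightarrow> real) \<Rightarrow> bool" where
  "quasi_banach_subspace S n \<longleftrightarrow> quasi_normed_subspace S n \<and> complete_wrt S n"

definition lc_vector_topology :: "'a::real_vector set \<Rightarrow> 'a topology \<Rightarrow> bool" where
  "lc_vector_topology S \<tau> \<longleftrightarrow> topspace \<tau> = S \<and> Hausdorff_space \<tau> \<and>
     continuous_map (prod_topology \<tau> \<tau>) \<tau> (\<lambda>(x, y). x + y) \<and>
     continuous_map (prod_topology euclideanreal \<tau>) \<tau> (\<lambda>(c, x). c *\<^sub>R x) \<and>
     (\<forall>U x. openin \<tau> U \<and> x \<in> U \<longrightarrow> (\<exists>V. openin \<tau> V \<and> convex V \<and> x \<in> V \<and> V \<subseteq> U))"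

definition Rpen :: "('a \<Rightarrow> real) \<Rightarrow> real \<Rightarrow> 'a \<Rightarrow> real" where
  "Rpen nX u x = (1 / u) * (nX x) powr u"

definition Tfun :: "('a \<Rightarrow> 'y::real_normed_vector) \<Rightarrow> ('a \<Rightarrow> real) \<Rightarrow> real \<Rightarrow> real \<Rightarrow> 'a \<Rightarrow> 'y \<Rightarrow> real" where
  "Tfun A nX u \<alpha> x g = (1 / (2 * \<alpha>)) * (norm (g - A x))\<^sup>2 + Rpen nX u x"

definition Rmin :: "('a \<Rightarrow> 'y::real_normed_vector) \<Rightarrow> 'a set \<Rightarrow> ('a \<Rightarrow> real) \<Rightarrow> real \<Rightarrow> real \<Rightarrow> 'y \<Rightarrow> 'a set" where
  "Rmin A S nX u \<alpha> g = {x \<in> S. \<forall>y\<in>S. Tfun A nX u \<alpha> x g \<le> Tfun A nX u \<alpha> y g}"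

definition rho :: "('a \<Rightarrow> 'y::real_normed_vector) \<Rightarrow> 'a set \<Rightarrow> ('a \<Rightarrow> real) \<Rightarrow> real \<Rightarrow> real \<Rightarrow> 'a \<Rightarrow> ereal" where
  "rho A S nX u \<nu> x = (SUP p \<in> {(\<alpha>, xa). \<alpha> > 0 \<and> xa \<in> Rmin A S nX u \<alpha> (A x)}.
      ereal (fst p powr (- \<nu>) * norm (A x - A (snd p))))"

definition K1set :: "('a \<Rightarrow> 'y::real_normed_vector) \<Rightarrow> 'a set \<Rightarrow> ('a \<Rightarrow> real) \<Rightarrow> real \<Rightarrow> 'a set" where
  "K1set A S nX u = {x \<in> S. rho A S nX u 1 x < \<infinity>}"

text \<open>Real interpolation (K-method) between X_A (ambient, norm) and a quasi-normed Xs.\<close>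

definition Kfun :: "'a::real_normed_vector set \<Rightarrow> ('a \<Rightarrow> real) \<Rightarrow> 'a \<Rightarrow> real \<Rightarrow> real" where
  "Kfun Xs ns x t = Inf ((\<lambda>z. norm (x - z) + t * ns z) ` Xs)"

definition interp_inf_norm :: "'a::real_normed_vector set \<Rightarrow> ('a \<Rightarrow> real) \<Rightarrow> real \<Rightarrow> 'a \<Rightarrow> ereal" where
  "interp_inf_norm Xs ns \<theta> x = (SUP t \<in> {0<..}. ereal (t powr (- \<theta>) * Kfun Xs ns x t))"

definition interp_inf_space :: "'a::real_normed_vector set \<Rightarrow> ('a \<Rightarrow> real) \<Rightarrow> real \<Rightarrow> 'a set" where
  "interp_inf_space Xs ns \<theta> = {x. interp_inf_norm Xs ns \<theta> x < \<infinity>}"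

definition interp_q_integral :: "'a::real_normed_vector set \<Rightarrow> ('a \<Rightarrow> real) \<Rightarrow> real \<Rightarrow> real \<Rightarrow> 'a \<Rightarrow> ennreal" where
  "interp_q_integral Xs ns \<theta> q x =
     (\<integral>\<^sup>+ t. ennreal ((t powr (- \<theta>) * Kfun Xs ns x t) powr q / t) * indicator {0<..} t \<partial>lborel)"

definition interp_q_space :: "'a::real_normed_vector set \<Rightarrow> ('a \<Rightarrow> real) \<Rightarrow> real \<Rightarrow> real \<Rightarrow> 'a set" where
  "interp_q_space Xs ns \<theta> q = {x. interp_q_integral Xs ns \<theta> q x < \<infinity>}"

definition interp_q_norm :: "'a::real_normed_vector set \<Rightarrow> ('a \<Rightarrow> real) \<Rightarrow> real \<Rightarrow> real \<Rightarrow> 'a \<Rightarrow> real" where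
  "interp_q_norm Xs ns \<theta> q x = (enn2real (interp_q_integral Xs ns \<theta> q x)) powr (1 / q)"

end

theory Submission
  imports Defs
begin

text \<open>Let s = (\<delta> / \<rho>) powr (1 / \<theta>) be the scale at which the bound \<rho> * t powr \<theta>
  on the K-functional of x meets the noise level. Splitting x = (x - z) + z with z in K1 at
  scale t and comparing the minimiser for data g with the minimiser for the exact data A z bounds
  the residual of the regularised solution by
  \<delta> + \<rho> * t powr \<theta> + \<alpha> * (\<rho> * t powr (\<theta> - 1)) powr (u - 1) up to constants.
  At t = s this keeps the residual of the a-priori choice of \<alpha> of order \<delta>; at t = \<kappa> s with
  small \<kappa> it forces the parameter of the discrepancy principle to be at least of the a-priori
  order. Since a minimiser lies in K1 with rho 1 bounded by twice its residual over \<alpha>, in both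
  cases its K1-norm is of order \<delta> / s. Hence the K-functional of the error is of order
  \<rho> * t powr \<theta> for t \<le> s and of order \<delta> for t > s, and integrating yields the
  (\<xi>, 1)-interpolation norm bound \<rho> powr (\<xi> / \<theta>) * \<delta> powr (1 - \<xi> / \<theta>).\<close>

lemma normed_subspace_zero: "normed_subspace S n \<Longrightarrow> n 0 = 0"
  unfolding normed_subspace_def by (auto simp: subspace_0)

lemma powr_convex_comb_nonneg:
  fixes a b t p :: real
  assumes "0 \<le> a" "0 \<le> b" "0 \<le> t" "t \<le> 1" "p \<ge> 1"
  shows "((1 - t) * a + t * b) powr p \<le> (1 - t) * a powr p + t * b powr p"
proof (cases "a = 0 \<or> b = 0")
  case True
  have le_self: "s powr p \<le> s" if "0 \<le> s" "s \<le> 1" for s :: real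
    using that assms(5) powr_le_one_le[of s p] by (cases "s = 0") auto
  show ?thesis
  proof (cases "a = 0")
    case True
    have "(t * b) powr p = t powr p * b powr p" using assms by (simp add: powr_mult)
    also have "\<dots> \<le> t * b powr p" using le_self[of t] assms by (intro mult_right_mono) auto
    finally show ?thesis using True by simp
  next
    case False
    with \<open>a = 0 \<or> b = 0\<close> have "b = 0" by simp
    have "((1 - t) * a) powr p = (1 - t) powr p * a powr p" using assms by (simp add: powr_mult)
    also have "\<dots> \<le> (1 - t) * a powr p" using le_self[of "1 - t"] assms by (intro mult_right_mono) auto
    finally show ?thesis using \<open>b = 0\<close> by simp
  qed
next
  case False
  then show ?thesis using convex_onD[OF powr_convex[OF assms(5)], of t a b] assms by auto
qed

lemma Rpen_convex_comb:
  assumes ns: "normed_subspace S n" and "a \<in> S" "b \<in> S" "0 \<le> t" "t \<le> 1" "u \<ge> 1"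
  shows "Rpen n u ((1 - t) *\<^sub>R a + t *\<^sub>R b) \<le> (1 - t) * Rpen n u a + t * Rpen n u b"
proof -
  have sub: "subspace S" and nn: "\<And>x. x \<in> S \<Longrightarrow> 0 \<le> n x"
    using ns unfolding normed_subspace_def by auto
  have in_S: "(1 - t) *\<^sub>R a \<in> S" "t *\<^sub>R b \<in> S"
    using sub assms by (auto simp: subspace_scale)
  have "n ((1 - t) *\<^sub>R a + t *\<^sub>R b) \<le> n ((1 - t) *\<^sub>R a) + n (t *\<^sub>R b)"
    using ns in_S unfolding normed_subspace_def by blast
  also have "\<dots> = (1 - t) * n a + t * n b"
    using ns assms unfolding normed_subspace_def by auto
  finally have "n ((1 - t) *\<^sub>R a + t *\<^sub>R b) powr u \<le> ((1 - t) * n a + t * n b) powr u"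
    using in_S sub nn assms by (intro powr_mono2) (auto simp: subspace_add)
  also have "\<dots> \<le> (1 - t) * n a powr u + t * n b powr u"
    using powr_convex_comb_nonneg nn assms by auto
  finally show ?thesis unfolding Rpen_def using assms(6)
    by (simp add: field_simps divide_right_mono)
qed

text \<open>Compare the minimiser with the points of the segment towards y and let the step
  length tend to 0.\<close>

lemma Rmin_variational_ineq:
  fixes A :: "'a::real_vector \<Rightarrow> 'y::real_inner"
  assumes lin: "linear A" and ns: "normed_subspace S nX" and u: "u \<ge> 1" and \<alpha>: "\<alpha> > 0"
    and xm: "xm \<in> Rmin A S nX u \<alpha> h" and y: "y \<in> S"
  shows "Rpen nX u xm + inner (h - A xm) (A y - A xm) / \<alpha> \<le> Rpen nX u y"
proof (rule ccontr)
  define a d where "a = h - A xm" and "d = A y - A xm"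
  define gap where "gap = Rpen nX u xm + inner a d / \<alpha> - Rpen nX u y"
  assume "\<not> ?thesis"
  then have gap_pos: "gap > 0" unfolding gap_def a_def d_def by simp
  have sub: "subspace S" using ns by (simp add: normed_subspace_def)
  have xmS: "xm \<in> S" and minimal: "\<And>z. z \<in> S \<Longrightarrow> Tfun A nX u \<alpha> xm h \<le> Tfun A nX u \<alpha> z h"
    using xm unfolding Rmin_def by auto
  have segment: "Rpen nX u xm \<le> Rpen nX u y - inner a d / \<alpha> + t * (norm d)\<^sup>2 / (2 * \<alpha>)"
    if t: "0 < t" "t \<le> 1" for t
  proof -
    define yt where "yt = (1 - t) *\<^sub>R xm + t *\<^sub>R y"
    have ytS: "yt \<in> S" unfolding yt_def using sub xmS y by (auto simp: subspace_scale subspace_add)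
    have "A yt = (1 - t) *\<^sub>R A xm + t *\<^sub>R A y"
      unfolding yt_def using lin by (simp add: linear_add linear_scale)
    then have residual: "h - A yt = a - t *\<^sub>R d"
      unfolding a_def d_def by (simp add: algebra_simps)
    have "(norm (a - t *\<^sub>R d))\<^sup>2 = (norm a)\<^sup>2 - 2 * t * inner a d + t\<^sup>2 * (norm d)\<^sup>2"
      unfolding power2_norm_eq_inner
      by (simp add: inner_diff_left inner_diff_right inner_commute algebra_simps power2_eq_square)
    moreover have "Tfun A nX u \<alpha> xm h \<le> Tfun A nX u \<alpha> yt h" using minimal ytS by blast
    moreover have "Rpen nX u yt \<le> (1 - t) * Rpen nX u xm + t * Rpen nX u y"
      unfolding yt_def using Rpen_convex_comb[OF ns xmS y _ _ u] t by auto
    ultimately have "(norm a)\<^sup>2 / (2 * \<alpha>) + Rpen nX u xm \<le>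
       ((norm a)\<^sup>2 - 2 * t * inner a d + t\<^sup>2 * (norm d)\<^sup>2) / (2 * \<alpha>) + ((1 - t) * Rpen nX u xm + t * Rpen nX u y)"
      unfolding Tfun_def residual by (simp flip: a_def)
    then have "t * Rpen nX u xm \<le> t * (Rpen nX u y - inner a d / \<alpha> + t * (norm d)\<^sup>2 / (2 * \<alpha>))"
      using \<alpha> by (simp add: field_simps power2_eq_square)
    then show ?thesis using t by simp
  qed
  define t where "t = (if d = 0 then 1 else min 1 (\<alpha> * gap / (norm d)\<^sup>2))"
  have t: "0 < t" "t \<le> 1" unfolding t_def using \<alpha> gap_pos by auto
  have "t * (norm d)\<^sup>2 \<le> \<alpha> * gap"
    unfolding t_def using \<alpha> gap_pos by (auto simp: min_def field_simps)
  also have "\<dots> < 2 * \<alpha> * gap" using \<alpha> gap_pos by simp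
  finally have "t * (norm d)\<^sup>2 / (2 * \<alpha>) < gap" using \<alpha> by (simp add: field_simps)
  with segment[OF t] show False unfolding gap_def by linarith
qed

lemma Rmin_rho_le:
  fixes A :: "'a::real_vector \<Rightarrow> 'y::real_inner"
  assumes lin: "linear A" and ns: "normed_subspace S nX" and u: "u \<ge> 1" and \<alpha>: "\<alpha> > 0"
    and xm: "xm \<in> Rmin A S nX u \<alpha> h"
  shows "rho A S nX u 1 xm \<le> ereal (2 * norm (h - A xm) / \<alpha>)"
  unfolding rho_def
proof (rule SUP_least)
  fix p assume "p \<in> {(\<beta>, xb). \<beta> > 0 \<and> xb \<in> Rmin A S nX u \<beta> (A xm)}"
  then obtain \<beta> xb where p: "p = (\<beta>, xb)" and \<beta>: "\<beta> > 0" and xb: "xb \<in> Rmin A S nX u \<beta> (A xm)"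
    by auto
  define D where "D = norm (A xm - A xb)"
  have xmS: "xm \<in> S" using xm unfolding Rmin_def by auto
  have xbS: "xb \<in> S" and "Tfun A nX u \<beta> xb (A xm) \<le> Tfun A nX u \<beta> xm (A xm)"
    using xb xmS unfolding Rmin_def by auto
  then have "D\<^sup>2 / (2 * \<beta>) + Rpen nX u xb \<le> Rpen nX u xm"
    unfolding Tfun_def D_def by simp
  moreover have "Rpen nX u xm + inner (h - A xm) (A xb - A xm) / \<alpha> \<le> Rpen nX u xb"
    using Rmin_variational_ineq[OF lin ns u \<alpha> xm xbS] .
  moreover have "- inner (h - A xm) (A xb - A xm) \<le> norm (h - A xm) * D"
    using norm_cauchy_schwarz[of "h - A xm" "A xm - A xb"] unfolding D_def
    by (simp add: inner_diff_right)
  ultimately have "D\<^sup>2 / (2 * \<beta>) \<le> norm (h - A xm) * D / \<alpha>"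
    using \<alpha> by (smt (verit, best) divide_right_mono minus_divide_left)
  then have "D * D * \<alpha> \<le> 2 * \<beta> * norm (h - A xm) * D"
    using \<alpha> \<beta> by (simp add: field_simps power2_eq_square)
  then have "D * \<alpha> \<le> 2 * \<beta> * norm (h - A xm)"
    using \<beta> by (cases "D = 0") (auto simp: D_def mult.commute[of _ D] mult.assoc)
  then have "\<beta> powr (- 1) * D \<le> 2 * norm (h - A xm) / \<alpha>"
    using \<alpha> \<beta> by (simp add: powr_minus_divide field_simps)
  then show "ereal (fst p powr (- 1) * norm (A xm - A (snd p))) \<le> ereal (2 * norm (h - A xm) / \<alpha>)"
    using p D_def by simp
qed

text \<open>Adding the variational inequalities of xh and za gives
  norm (g - A xh - v) \<le> norm (g - A za - v) for v = A z - A za.\<close>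

lemma Rmin_residual_le:
  fixes A :: "'a::real_vector \<Rightarrow> 'y::real_inner"
  assumes lin: "linear A" and ns: "normed_subspace S nX" and u: "u \<ge> 1" and \<alpha>: "\<alpha> > 0"
    and za: "za \<in> Rmin A S nX u \<alpha> (A z)" and xh: "xh \<in> Rmin A S nX u \<alpha> g"
  shows "norm (g - A xh) \<le> norm (g - A za) + 2 * norm (A z - A za)"
proof -
  define a b v where "a = g - A xh" and "b = g - A za" and "v = A z - A za"
  have xhS: "xh \<in> S" and zaS: "za \<in> S" using xh za unfolding Rmin_def by auto
  have "Rpen nX u za + inner v (b - a) / \<alpha> \<le> Rpen nX u xh"
    using Rmin_variational_ineq[OF lin ns u \<alpha> za xhS] unfolding a_def b_def v_def by simp
  moreover have "Tfun A nX u \<alpha> xh g \<le> Tfun A nX u \<alpha> za g" using xh zaS unfolding Rmin_def by auto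
  then have "(norm a)\<^sup>2 / (2 * \<alpha>) + Rpen nX u xh \<le> (norm b)\<^sup>2 / (2 * \<alpha>) + Rpen nX u za"
    unfolding Tfun_def a_def b_def by simp
  ultimately have "((norm a)\<^sup>2 + 2 * inner v (b - a)) / (2 * \<alpha>) \<le> (norm b)\<^sup>2 / (2 * \<alpha>)"
    by (simp add: add_divide_distrib)
  then have "(norm a)\<^sup>2 + 2 * inner v (b - a) \<le> (norm b)\<^sup>2"
    using \<alpha> by (simp add: divide_le_cancel)
  then have "(norm (a - v))\<^sup>2 \<le> (norm (b - v))\<^sup>2"
    unfolding power2_norm_eq_inner
    by (simp add: inner_diff_left inner_diff_right inner_commute algebra_simps)
  then have "norm (a - v) \<le> norm (b - v)" by (rule power2_le_imp_le) simp
  moreover have "norm a \<le> norm (a - v) + norm v" using norm_triangle_sub[of a v] by linarith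
  moreover have "norm (b - v) \<le> norm b + norm v" by (rule norm_triangle_ineq4)
  ultimately show ?thesis unfolding a_def b_def v_def by linarith
qed

lemma compactin_lower_semicontinuous_attains_min:
  fixes f :: "'a \<Rightarrow> 'b::linorder"
  assumes K: "compactin X K" "K \<noteq> {}" and lsc: "\<And>a. openin X {x \<in> topspace X. a < f x}"
  shows "\<exists>x\<in>K. \<forall>y\<in>K. f x \<le> f y"
proof (rule ccontr)
  assume "\<not> ?thesis"
  then have below: "\<forall>x\<in>K. \<exists>y\<in>K. f y < f x" by (auto simp: not_le)
  let ?U = "\<lambda>y. {x \<in> topspace X. f y < f x}"
  have "(\<forall>U\<in>?U ` K. openin X U) \<and> K \<subseteq> \<Union>(?U ` K) \<longrightarrow>
      (\<exists>\<F>. finite \<F> \<and> \<F> \<subseteq> ?U ` K \<and> K \<subseteq> \<Union>\<F>)"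
    using K(1) unfolding compactin_def by (rule conjunct2[THEN spec])
  moreover have "K \<subseteq> \<Union>(?U ` K)" using below compactin_subset_topspace[OF K(1)] by blast
  ultimately obtain \<F> where \<F>: "finite \<F>" "\<F> \<subseteq> ?U ` K" "K \<subseteq> \<Union>\<F>"
    using lsc by blast
  obtain Y where Y: "Y \<subseteq> K" "finite Y" "\<F> = ?U ` Y"
    using finite_subset_image[OF \<F>(1,2)] by blast
  then have "Y \<noteq> {}" using K(2) \<F>(3) by auto
  then obtain y0 where y0: "y0 \<in> Y" "\<forall>y\<in>Y. \<not> f y < f y0"
    using arg_min_if_finite[OF Y(2), of f] by blast
  then have "y0 \<in> \<Union>(?U ` Y)" using Y \<F>(3) by blast
  then obtain y where "y \<in> Y" "f y < f y0" by blast
  with y0 show False by blast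
qed

lemma openin_lower_semicontinuous_add:
  fixes f g :: "'a \<Rightarrow> real"
  assumes "\<And>a. openin X {x \<in> topspace X. a < f x}" "\<And>a. openin X {x \<in> topspace X. a < g x}"
  shows "openin X {x \<in> topspace X. a < f x + g x}"
proof -
  have "{x \<in> topspace X. a < f x + g x} =
      (\<Union>r. {x \<in> topspace X. r < f x} \<inter> {x \<in> topspace X. a - r < g x})"
  proof (intro equalityI subsetI)
    fix x assume x: "x \<in> {x \<in> topspace X. a < f x + g x}"
    define r where "r = f x - (f x + g x - a) / 2"
    have "r < f x" "a - r < g x" unfolding r_def using x by (auto simp: field_simps)
    then show "x \<in> (\<Union>r. {x \<in> topspace X. r < f x} \<inter> {x \<in> topspace X. a - r < g x})"
      using x by blast
  qed auto
  then show ?thesis using assms by (auto intro!: openin_Union)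
qed

lemma norm_gt_iff_inner:
  fixes v :: "'y::real_inner"
  shows "s < norm v \<longleftrightarrow> (\<exists>z. norm z \<le> 1 \<and> s < inner v z)"
proof
  assume s: "s < norm v"
  show "\<exists>z. norm z \<le> 1 \<and> s < inner v z"
  proof (cases "v = 0")
    case False
    then have "norm (v /\<^sub>R norm v) \<le> 1" "inner v (v /\<^sub>R norm v) = norm v"
      by (auto simp: power2_norm_eq_inner[symmetric] power2_eq_square)
    with s show ?thesis by metis
  qed (use s in \<open>auto intro: exI[of _ 0]\<close>)
next
  assume "\<exists>z. norm z \<le> 1 \<and> s < inner v z"
  then obtain z where "norm z \<le> 1" "s < inner v z" by auto
  moreover have "inner v z \<le> norm v * norm z" by (rule norm_cauchy_schwarz)
  moreover have "norm v * norm z \<le> norm v" using \<open>norm z \<le> 1\<close> by (simp add: mult_left_le)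
  ultimately show "s < norm v" by linarith
qed

text \<open>A norm is the supremum of the functionals inner _ z over the unit ball, so it is lower
  semicontinuous for every topology making these functionals continuous.\<close>

lemma openin_norm_superlevel:
  fixes B :: "'a \<Rightarrow> 'y::real_inner"
  assumes cont: "\<And>z. continuous_map X euclideanreal (\<lambda>x. inner (B x) z)"
  shows "openin X {x \<in> topspace X. s < norm (B x)}"
proof -
  have "{x \<in> topspace X. s < norm (B x)} = (\<Union>z\<in>{z. norm z \<le> 1}. {x \<in> topspace X. s < inner (B x) z})"
    by (auto simp: norm_gt_iff_inner)
  also have "openin X \<dots>"
    using openin_continuous_map_preimage[OF cont, of "{s<..}"] by (intro openin_Union) auto
  finally show ?thesis .
qed

lemma Rmin_nonempty:
  fixes A :: "'a::real_vector \<Rightarrow> 'y::real_inner"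
  assumes lin: "linear A" and ns: "normed_subspace S nX" and u: "u > 0" and \<beta>: "\<beta> > 0"
    and lc: "lc_vector_topology S \<tau>"
    and cpt: "\<And>c. compactin \<tau> {x \<in> S. Rpen nX u x \<le> c}"
    and cont: "\<And>z. continuous_map \<tau> euclideanreal (\<lambda>x. inner (A x) z)"
  shows "Rmin A S nX u \<beta> h \<noteq> {}"
proof -
  define F where "F x = Tfun A nX u \<beta> x h" for x
  have top: "topspace \<tau> = S" and hd: "Hausdorff_space \<tau>"
    using lc unfolding lc_vector_topology_def by auto
  have "0 \<in> S" using ns by (simp add: normed_subspace_def subspace_0)
  have R0: "Rpen nX u 0 = 0" unfolding Rpen_def using normed_subspace_zero[OF ns] u by simp
  have data_le: "Rpen nX u x \<le> F x" for x unfolding F_def Tfun_def using \<beta> by simp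
  have lsc_R: "openin \<tau> {x \<in> topspace \<tau>. a < Rpen nX u x}" for a
  proof -
    have "closedin \<tau> {x \<in> S. Rpen nX u x \<le> a}" using compactin_imp_closedin[OF hd cpt] .
    then have "openin \<tau> (topspace \<tau> - {x \<in> S. Rpen nX u x \<le> a})" by blast
    also have "topspace \<tau> - {x \<in> S. Rpen nX u x \<le> a} = {x \<in> topspace \<tau>. a < Rpen nX u x}"
      using top by auto
    finally show ?thesis .
  qed
  have lsc_data: "openin \<tau> {x \<in> topspace \<tau>. a < (norm (h - A x))\<^sup>2 / (2 * \<beta>)}" for a
  proof (cases "a < 0")
    case True
    then have "{x \<in> topspace \<tau>. a < (norm (h - A x))\<^sup>2 / (2 * \<beta>)} = topspace \<tau>"
      using \<beta> by (auto intro: less_le_trans)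
    then show ?thesis by simp
  next
    case False
    have "a < (norm (h - A x))\<^sup>2 / (2 * \<beta>) \<longleftrightarrow> sqrt (2 * \<beta> * a) < sqrt ((norm (h - A x))\<^sup>2)" for x
      using \<beta> by (simp only: real_sqrt_less_iff) (simp add: field_simps)
    then have "a < (norm (h - A x))\<^sup>2 / (2 * \<beta>) \<longleftrightarrow> sqrt (2 * \<beta> * a) < norm (h - A x)" for x
      by simp
    moreover have "continuous_map \<tau> euclideanreal (\<lambda>x. inner (h - A x) z)" for z
      using cont[of z] by (simp add: inner_diff_left continuous_map_diff)
    ultimately show ?thesis
      using openin_norm_superlevel[of \<tau> "\<lambda>x. h - A x" "sqrt (2 * \<beta> * a)"] by simp
  qed
  have "F x = (norm (h - A x))\<^sup>2 / (2 * \<beta>) + Rpen nX u x" for x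
    unfolding F_def Tfun_def by simp
  then have lsc_F: "openin \<tau> {x \<in> topspace \<tau>. a < F x}" for a
    using openin_lower_semicontinuous_add[OF lsc_data lsc_R] by presburger
  define K where "K = {x \<in> S. Rpen nX u x \<le> F 0}"
  have "0 \<in> K" unfolding K_def using \<open>0 \<in> S\<close> R0 data_le[of 0] by simp
  then obtain xm where xm: "xm \<in> K" "\<forall>y\<in>K. F xm \<le> F y"
    using compactin_lower_semicontinuous_attains_min[OF cpt[of "F 0"] _ lsc_F]
    unfolding K_def by blast
  have "F xm \<le> F y" if "y \<in> S" for y
  proof (cases "y \<in> K")
    case False
    then have "F 0 < F y" using that data_le[of y] unfolding K_def by auto
    then show ?thesis using xm \<open>0 \<in> K\<close> by force
  qed (use xm in blast)
  then have "xm \<in> Rmin A S nX u \<beta> h" using xm(1) unfolding Rmin_def K_def F_def by simp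
  then show ?thesis by blast
qed

lemma Kfun_le:
  assumes "z \<in> Xs" "\<forall>z\<in>Xs. ns z \<ge> 0" "t \<ge> 0"
  shows "Kfun Xs ns x t \<le> norm (x - z) + t * ns z"
  unfolding Kfun_def
proof (rule cInf_lower)
  show "norm (x - z) + t * ns z \<in> (\<lambda>z. norm (x - z) + t * ns z) ` Xs" using assms by blast
  show "bdd_below ((\<lambda>z. norm (x - z) + t * ns z) ` Xs)"
    using assms by (intro bdd_belowI[of _ 0]) auto
qed

lemma Kfun_nonneg:
  assumes "Xs \<noteq> {}" "\<forall>z\<in>Xs. ns z \<ge> 0" "t \<ge> 0"
  shows "Kfun Xs ns x t \<ge> 0"
  unfolding Kfun_def using assms by (intro cInf_greatest) auto

lemma Kfun_lessE:
  assumes "Kfun Xs ns x t < c" "Xs \<noteq> {}"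
  obtains z where "z \<in> Xs" "norm (x - z) + t * ns z < c"
  using cInf_lessD[OF _ assms(1)[unfolded Kfun_def]] assms(2) by blast

lemma Kfun_le_interp_inf_norm:
  assumes "interp_inf_norm Xs ns \<theta> x \<le> ereal \<rho>" "t > 0"
  shows "Kfun Xs ns x t \<le> \<rho> * t powr \<theta>"
proof -
  have "ereal (t powr (- \<theta>) * Kfun Xs ns x t) \<le> interp_inf_norm Xs ns \<theta> x"
    unfolding interp_inf_norm_def using assms(2) by (intro SUP_upper) auto
  then have "t powr (- \<theta>) * Kfun Xs ns x t \<le> \<rho>"
    using assms(1) by (metis ereal_less_eq(3) order_trans)
  then have "t powr \<theta> * (t powr (- \<theta>) * Kfun Xs ns x t) \<le> \<rho> * t powr \<theta>"
    using assms(2) by (simp add: mult.commute mult_left_mono)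
  then show ?thesis using assms(2) by (simp add: powr_minus field_simps)
qed

lemma interp_inf_norm_decomposition:
  assumes "interp_inf_norm Xs ns \<theta> x \<le> ereal \<rho>" "\<rho> > 0" "t > 0" "Xs \<noteq> {}"
  obtains z where "z \<in> Xs" "norm (x - z) + t * ns z < 2 * \<rho> * t powr \<theta>"
proof -
  have "Kfun Xs ns x t \<le> \<rho> * t powr \<theta>" using Kfun_le_interp_inf_norm[OF assms(1,3)] .
  also have "\<dots> < 2 * \<rho> * t powr \<theta>" using assms(2,3) by simp
  finally show ?thesis using that assms(4) by (auto elim: Kfun_lessE)
qed

lemma Kfun_diff_le:
  assumes qn: "quasi_normed_subspace Xs ns"
    and Kq: "Kq \<ge> 1" "\<forall>v\<in>Xs. \<forall>w\<in>Xs. ns (v + w) \<le> Kq * (ns v + ns w)"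
    and y: "y \<in> Xs" and z: "z \<in> Xs" and t: "t \<ge> 0"
  shows "Kfun Xs ns (x - y) t \<le> Kq * (norm (x - z) + t * ns z + t * ns y)"
proof -
  have sub: "subspace Xs" and nn: "\<forall>v\<in>Xs. ns v \<ge> 0"
    and hom: "\<forall>c. \<forall>v\<in>Xs. ns (c *\<^sub>R v) = \<bar>c\<bar> * ns v"
    using qn unfolding quasi_normed_subspace_def by auto
  have "- y \<in> Xs" "z - y \<in> Xs" using sub y z by (auto simp: subspace_neg subspace_diff)
  have "ns (- y) = ns y" using hom y by (metis abs_neg_one mult_1 scaleR_minus1_left)
  then have "ns (z - y) \<le> Kq * (ns z + ns y)"
    using Kq(2) z \<open>- y \<in> Xs\<close> by (metis diff_conv_add_uminus)
  then have "t * ns (z - y) \<le> Kq * (t * ns z + t * ns y)"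
    using t by (metis distrib_left mult.left_commute mult_left_mono)
  moreover have "norm (x - z) \<le> Kq * norm (x - z)"
    using mult_right_mono[OF Kq(1), of "norm (x - z)"] by simp
  moreover have "Kfun Xs ns (x - y) t \<le> norm (x - y - (z - y)) + t * ns (z - y)"
    using Kfun_le[OF \<open>z - y \<in> Xs\<close> nn t] .
  ultimately show ?thesis by (simp add: distrib_left)
qed

lemma interp_q_integral_le:
  fixes s a b \<xi> \<theta> :: real
  assumes nn: "\<And>t. t > 0 \<Longrightarrow> 0 \<le> Kfun Xs ns x t"
    and small: "\<And>t. 0 < t \<Longrightarrow> t \<le> s \<Longrightarrow> Kfun Xs ns x t \<le> a * t powr \<theta>"
    and large: "\<And>t. s < t \<Longrightarrow> Kfun Xs ns x t \<le> b"
    and s: "s > 0" and \<xi>: "0 < \<xi>" "\<xi> < \<theta>" and ab: "a \<ge> 0" "b \<ge> 0"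
  shows "interp_q_integral Xs ns \<xi> 1 x \<le> ennreal (a * s powr (\<theta> - \<xi>) / (\<theta> - \<xi>) + b * s powr (- \<xi>) / \<xi>)"
proof -
  define g1 g2 where "g1 = (\<lambda>t::real. a * t powr (\<theta> - \<xi> - 1))" and "g2 = (\<lambda>t::real. b * t powr (- \<xi> - 1))"
  have shift: "t powr (- \<xi>) * c / t = c * t powr (- \<xi> - 1)" if "t > 0" for t c :: real
    using that by (simp add: powr_diff powr_minus field_simps)
  have pointwise: "ennreal ((t powr (- \<xi>) * Kfun Xs ns x t) powr 1 / t) * indicator {0<..} t
        \<le> ennreal (g1 t) * indicator {0..s} t + ennreal (g2 t) * indicator {s..} t" for t
  proof (cases "t > 0")
    case True
    then have power_one: "(t powr (- \<xi>) * Kfun Xs ns x t) powr 1 / t = t powr (- \<xi>) * Kfun Xs ns x t / t"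
      using nn[OF True] by simp
    have "t powr (- \<xi>) * Kfun Xs ns x t / t \<le> (if t \<le> s then g1 t else g2 t)"
    proof (cases "t \<le> s")
      case True
      have "t powr (- \<xi>) * Kfun Xs ns x t / t \<le> t powr (- \<xi>) * (a * t powr \<theta>) / t"
        using small[OF \<open>t > 0\<close> True] \<open>t > 0\<close> by (intro divide_right_mono mult_left_mono) auto
      also have "\<dots> = a * (t powr \<theta> * t powr (- \<xi> - 1))"
        using shift[OF \<open>t > 0\<close>] by (simp add: mult.assoc)
      also have "\<dots> = g1 t" unfolding g1_def powr_add[symmetric] by (simp add: algebra_simps)
      finally show ?thesis using True by simp
    next
      case False
      have "t powr (- \<xi>) * Kfun Xs ns x t / t \<le> t powr (- \<xi>) * b / t"
        using large False \<open>t > 0\<close> by (intro divide_right_mono mult_left_mono) auto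
      also have "\<dots> = g2 t" using \<open>t > 0\<close> by (simp add: shift g2_def)
      finally show ?thesis using False by simp
    qed
    then have "ennreal ((t powr (- \<xi>) * Kfun Xs ns x t) powr 1 / t)
        \<le> ennreal (if t \<le> s then g1 t else g2 t)"
      unfolding power_one by (rule ennreal_leI)
    also have "\<dots> \<le> ennreal (g1 t) * indicator {0..s} t + ennreal (g2 t) * indicator {s..} t"
      using True by (auto simp: indicator_def)
    finally show ?thesis using True by simp
  qed simp
  have "interp_q_integral Xs ns \<xi> 1 x
      \<le> (\<integral>\<^sup>+ t. ennreal (g1 t) * indicator {0..s} t + ennreal (g2 t) * indicator {s..} t \<partial>lborel)"
    unfolding interp_q_integral_def by (rule nn_integral_mono) (rule pointwise)
  also have "\<dots> = (\<integral>\<^sup>+ t. ennreal (g1 t) * indicator {0..s} t \<partial>lborel)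
      + (\<integral>\<^sup>+ t. ennreal (g2 t) * indicator {s..} t \<partial>lborel)"
    unfolding g1_def g2_def by (rule nn_integral_add) auto
  also have "(\<integral>\<^sup>+ t. ennreal (g1 t) * indicator {0..s} t \<partial>lborel) = ennreal (a * s powr (\<theta> - \<xi>) / (\<theta> - \<xi>))"
  proof -
    have "((\<lambda>t. t powr (\<theta> - \<xi> - 1)) has_integral (s powr (\<theta> - \<xi> - 1 + 1) / (\<theta> - \<xi> - 1 + 1))) {0..s}"
      using \<xi> s by (intro has_integral_powr_from_0) auto
    from has_integral_mult_right[OF this, of a]
    have "(g1 has_integral (a * s powr (\<theta> - \<xi>) / (\<theta> - \<xi>))) {0..s}"
      unfolding g1_def by simp
    then show ?thesis by (intro nn_integral_has_integral_lebesgue') (auto simp: g1_def ab)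
  qed
  also have "(\<integral>\<^sup>+ t. ennreal (g2 t) * indicator {s..} t \<partial>lborel) = ennreal (b * s powr (- \<xi>) / \<xi>)"
  proof -
    have "((\<lambda>t. t powr (- \<xi> - 1)) has_integral (-(s powr (- \<xi> - 1 + 1)) / (- \<xi> - 1 + 1))) {s..}"
      using \<xi> s by (intro has_integral_powr_to_inf) auto
    from has_integral_mult_right[OF this, of b]
    have "(g2 has_integral (b * s powr (- \<xi>) / \<xi>)) {s..}"
      unfolding g2_def by simp
    then show ?thesis by (intro nn_integral_has_integral_lebesgue') (auto simp: g2_def ab)
  qed
  also have "ennreal (a * s powr (\<theta> - \<xi>) / (\<theta> - \<xi>)) + ennreal (b * s powr (- \<xi>) / \<xi>)
      = ennreal (a * s powr (\<theta> - \<xi>) / (\<theta> - \<xi>) + b * s powr (- \<xi>) / \<xi>)"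
    using \<xi> ab by (intro ennreal_plus[symmetric]) auto
  finally show ?thesis .
qed

lemma interp_q_embedding_le:
  assumes emb: "\<forall>y \<in> interp_q_space Xs ns \<xi> 1. y \<in> L \<and> nL y \<le> c * interp_q_norm Xs ns \<xi> 1 y"
    and int: "interp_q_integral Xs ns \<xi> 1 y \<le> ennreal B" and B: "B \<ge> 0"
  shows "y \<in> L \<and> nL y \<le> max c 1 * B"
proof -
  have "y \<in> interp_q_space Xs ns \<xi> 1"
    using le_less_trans[OF int ennreal_less_top] unfolding interp_q_space_def by simp
  moreover have norm: "0 \<le> interp_q_norm Xs ns \<xi> 1 y" "interp_q_norm Xs ns \<xi> 1 y \<le> B"
    using enn2real_leI[OF B int] unfolding interp_q_norm_def by auto
  moreover have "c * interp_q_norm Xs ns \<xi> 1 y \<le> max c 1 * B"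
    using norm by (intro mult_mono) auto
  ultimately show ?thesis using emb by force
qed

lemma powr_le_scaled_imp_le:
  fixes N k y p :: real
  assumes "N \<ge> 0" "y \<ge> 0" "k \<ge> 0" "p > 0" "N powr p \<le> k * y powr p"
  shows "N \<le> k powr (1 / p) * y"
proof -
  have "(N powr p) powr (1 / p) \<le> (k * y powr p) powr (1 / p)"
    using assms by (intro powr_mono2) auto
  then show ?thesis using assms by (simp add: powr_mult powr_powr)
qed

lemma mult_powr_le_powr:
  fixes t s \<theta> :: real
  assumes "0 < t" "t \<le> s" "\<theta> \<le> 1"
  shows "t * s powr (\<theta> - 1) \<le> t powr \<theta>"
proof -
  have "t * s powr (\<theta> - 1) \<le> t * t powr (\<theta> - 1)"
    using assms by (intro mult_left_mono powr_mono2') auto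
  also have "\<dots> = t powr \<theta>" using assms by (simp add: powr_diff)
  finally show ?thesis .
qed

lemma scale_powr_identities:
  fixes \<rho> \<delta> \<theta> u \<xi> :: real
  assumes \<rho>: "\<rho> > 0" and \<delta>: "\<delta> > 0" and \<theta>: "\<theta> > 0" and s: "s = (\<delta> / \<rho>) powr (1 / \<theta>)"
  shows "s > 0" "\<rho> * s powr \<theta> = \<delta>"
    "c * \<rho> powr (- (u - 1) / \<theta>) * \<delta> powr (((1 - \<theta>) * (u - 1) + \<theta>) / \<theta>) \<le> \<alpha>
       \<longleftrightarrow> c * \<delta> \<le> \<alpha> * (\<delta> / s) powr (u - 1)"
    "\<alpha> \<le> c * \<rho> powr (- (u - 1) / \<theta>) * \<delta> powr (((1 - \<theta>) * (u - 1) + \<theta>) / \<theta>)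
       \<longleftrightarrow> \<alpha> * (\<delta> / s) powr (u - 1) \<le> c * \<delta>"
    "\<rho> powr (\<xi> / \<theta>) * \<delta> powr (1 - \<xi> / \<theta>) = \<delta> * s powr (- \<xi>)"
proof -
  define \<Lambda> Q where "\<Lambda> = \<rho> powr (- (u - 1) / \<theta>) * \<delta> powr (((1 - \<theta>) * (u - 1) + \<theta>) / \<theta>)"
    and "Q = (\<delta> / s) powr (u - 1)"
  show s_pos: "s > 0" unfolding s using \<rho> \<delta> by simp
  have ln_s: "ln s = (ln \<delta> - ln \<rho>) / \<theta>" unfolding s using \<rho> \<delta> by (simp add: ln_powr ln_div)
  have "ln (\<rho> * s powr \<theta>) = ln \<delta>" using \<rho> s_pos \<theta> by (simp add: ln_mult ln_powr ln_s)
  then show "\<rho> * s powr \<theta> = \<delta>" using \<rho> s_pos \<delta> by (simp add: ln_inj_iff)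
  have "ln (\<Lambda> * Q) = ln \<delta>"
    unfolding \<Lambda>_def Q_def using \<rho> \<delta> s_pos \<theta> by (simp add: ln_mult ln_powr ln_div ln_s field_simps)
  then have "\<Lambda> * Q = \<delta>" unfolding \<Lambda>_def Q_def using \<rho> \<delta> s_pos by (simp add: ln_inj_iff)
  moreover have "Q > 0" unfolding Q_def using \<delta> s_pos by simp
  ultimately have "c * \<Lambda> \<le> \<alpha> \<longleftrightarrow> c * \<delta> \<le> \<alpha> * Q" "\<alpha> \<le> c * \<Lambda> \<longleftrightarrow> \<alpha> * Q \<le> c * \<delta>"
    by (metis mult.assoc mult_le_cancel_right_pos)+
  then show "c * \<rho> powr (- (u - 1) / \<theta>) * \<delta> powr (((1 - \<theta>) * (u - 1) + \<theta>) / \<theta>) \<le> \<alpha>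
       \<longleftrightarrow> c * \<delta> \<le> \<alpha> * (\<delta> / s) powr (u - 1)"
    "\<alpha> \<le> c * \<rho> powr (- (u - 1) / \<theta>) * \<delta> powr (((1 - \<theta>) * (u - 1) + \<theta>) / \<theta>)
       \<longleftrightarrow> \<alpha> * (\<delta> / s) powr (u - 1) \<le> c * \<delta>"
    unfolding \<Lambda>_def Q_def by (simp_all add: mult.assoc)
  have "ln (\<rho> powr (\<xi> / \<theta>) * \<delta> powr (1 - \<xi> / \<theta>)) = ln (\<delta> * s powr (- \<xi>))"
    using \<rho> \<delta> s_pos \<theta> by (simp add: ln_mult ln_powr ln_s field_simps)
  then show "\<rho> powr (\<xi> / \<theta>) * \<delta> powr (1 - \<xi> / \<theta>) = \<delta> * s powr (- \<xi>)"
    using \<rho> \<delta> s_pos by (simp add: ln_inj_iff)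
qed

lemma powr_rescale:
  fixes \<rho> \<delta> s c \<theta> u :: real
  assumes s: "s > 0" and c: "c > 0" and \<rho>: "\<rho> > 0" and scale: "\<rho> * s powr \<theta> = \<delta>"
  shows "\<rho> * (c * s) powr \<theta> = c powr \<theta> * \<delta>"
    and "(2 * \<rho> * (c * s) powr \<theta> / (c * s)) powr (u - 1)
         = 2 powr (u - 1) * c powr ((\<theta> - 1) * (u - 1)) * (\<delta> / s) powr (u - 1)"
proof -
  show "\<rho> * (c * s) powr \<theta> = c powr \<theta> * \<delta>"
    using s c scale by (simp add: powr_mult mult_ac)
  have "2 * \<rho> * (c * s) powr \<theta> / (c * s) = 2 * c powr (\<theta> - 1) * (\<delta> / s)"
    using s c scale by (simp add: powr_mult powr_diff field_simps)
  also have "\<dots> powr (u - 1) = (2 * c powr (\<theta> - 1)) powr (u - 1) * (\<delta> / s) powr (u - 1)"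
    using s \<rho> scale powr_mult[of "2 * c powr (\<theta> - 1)" "\<delta> / s" "u - 1"] by simp
  also have "(2 * c powr (\<theta> - 1)) powr (u - 1) = 2 powr (u - 1) * c powr ((\<theta> - 1) * (u - 1))"
    using c by (simp add: powr_mult powr_powr)
  finally show "(2 * \<rho> * (c * s) powr \<theta> / (c * s)) powr (u - 1)
         = 2 powr (u - 1) * c powr ((\<theta> - 1) * (u - 1)) * (\<delta> / s) powr (u - 1)" .
qed

text \<open>The compactness topology of the setting enters only through the existence of
  minimisers, which is therefore assumed directly as Rmin_exists.\<close>

locale tikhonov_setting =
  fixes A :: "'a::real_normed_vector \<Rightarrow> 'y::real_inner"
    and S :: "'a set" and nX :: "'a \<Rightarrow> real" and u M :: real and nK :: "'a \<Rightarrow> real"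
  assumes linear: "linear A"
    and M_ge: "M \<ge> 1"
    and norm_le_A: "\<And>x. norm x \<le> M * norm (A x)"
    and norm_A_le: "\<And>x. norm (A x) \<le> M * norm x"
    and normed_X: "normed_subspace S nX"
    and u_gt: "u > 1"
    and Rmin_exists: "\<And>\<alpha> h. \<alpha> > 0 \<Longrightarrow> Rmin A S nX u \<alpha> h \<noteq> {}"
    and quasi_normed_K1: "quasi_normed_subspace (K1set A S nX u) nK"
    and rho_le_nK: "\<And>x. x \<in> K1set A S nX u \<Longrightarrow> rho A S nX u 1 x \<le> ereal (M * nK x powr (u - 1))"
    and nK_le_rho: "\<And>x. x \<in> K1set A S nX u \<Longrightarrow> ereal (nK x powr (u - 1)) \<le> ereal M * rho A S nX u 1 x"
begin

abbreviation "K1 \<equiv> K1set A S nX u"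

lemma nK_nonneg: "x \<in> K1 \<Longrightarrow> nK x \<ge> 0"
  using quasi_normed_K1 unfolding quasi_normed_subspace_def by auto

lemma zero_in_K1: "0 \<in> K1"
  using quasi_normed_K1 unfolding quasi_normed_subspace_def by (simp add: subspace_0)

lemma nK_zero: "nK 0 = 0"
  using quasi_normed_K1 zero_in_K1 unfolding quasi_normed_subspace_def by blast

text \<open>For a minimiser za for the exact data A z, the bound on rho 1 z controls
  norm (A z - A za); the rest is Rmin_residual_le.\<close>

lemma residual_le_approximant:
  assumes z: "z \<in> K1" and data: "norm (g - A x) \<le> \<delta>" and \<alpha>: "\<alpha> > 0"
    and xh: "xh \<in> Rmin A S nX u \<alpha> g"
  shows "norm (g - A xh) \<le> \<delta> + M * norm (x - z) + 3 * \<alpha> * M * nK z powr (u - 1)"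
proof -
  obtain za where za: "za \<in> Rmin A S nX u \<alpha> (A z)" using Rmin_exists[OF \<alpha>] by blast
  have "ereal (\<alpha> powr (- 1) * norm (A z - A za)) \<le> rho A S nX u 1 z"
    unfolding rho_def using \<alpha> za by (intro SUP_upper2[of "(\<alpha>, za)"]) auto
  also have "\<dots> \<le> ereal (M * nK z powr (u - 1))" using rho_le_nK[OF z] .
  finally have "norm (A z - A za) \<le> \<alpha> * M * nK z powr (u - 1)"
    using \<alpha> by (simp add: powr_minus_divide field_simps)
  moreover have "norm (A x - A z) \<le> M * norm (x - z)"
    using norm_A_le[of "x - z"] linear by (simp add: linear_diff)
  moreover have "norm (g - A za) \<le> norm (g - A x) + norm (A x - A z) + norm (A z - A za)"
    using norm_triangle_ineq[of "(g - A x) + (A x - A z)" "A z - A za"]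
      norm_triangle_ineq[of "g - A x" "A x - A z"] by simp
  moreover have "norm (g - A xh) \<le> norm (g - A za) + 2 * norm (A z - A za)"
    using Rmin_residual_le[OF linear normed_X _ \<alpha> za xh] u_gt by simp
  ultimately show ?thesis using data by linarith
qed

lemma residual_le_interp:
  assumes x: "interp_inf_norm K1 nK \<theta> x \<le> ereal \<rho>" and \<rho>: "\<rho> > 0" and t: "t > 0"
    and data: "norm (g - A x) \<le> \<delta>" and \<alpha>: "\<alpha> > 0" and xh: "xh \<in> Rmin A S nX u \<alpha> g"
  shows "norm (g - A xh) \<le> \<delta> + 2 * M * \<rho> * t powr \<theta> + 3 * \<alpha> * M * (2 * \<rho> * t powr \<theta> / t) powr (u - 1)"
proof -
  obtain z where z: "z \<in> K1" "norm (x - z) + t * nK z < 2 * \<rho> * t powr \<theta>"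
    using interp_inf_norm_decomposition[OF x \<rho> t] zero_in_K1 by blast
  have "t * nK z \<ge> 0" using t nK_nonneg[OF z(1)] by simp
  then have "norm (x - z) \<le> 2 * \<rho> * t powr \<theta>" using z(2) by linarith
  then have "M * norm (x - z) \<le> 2 * M * \<rho> * t powr \<theta>" using M_ge by (simp add: mult_left_mono)
  moreover have "t * nK z \<le> 2 * \<rho> * t powr \<theta>" using z(2) norm_ge_zero[of "x - z"] by linarith
  then have "nK z \<le> 2 * \<rho> * t powr \<theta> / t"
    using t by (simp add: field_simps)
  then have "nK z powr (u - 1) \<le> (2 * \<rho> * t powr \<theta> / t) powr (u - 1)"
    using nK_nonneg[OF z(1)] u_gt by (intro powr_mono2) auto
  then have "3 * \<alpha> * M * nK z powr (u - 1) \<le> 3 * \<alpha> * M * (2 * \<rho> * t powr \<theta> / t) powr (u - 1)"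
    using \<alpha> M_ge by (intro mult_left_mono) auto
  ultimately show ?thesis using residual_le_approximant[OF z(1) data \<alpha> xh] by linarith
qed

lemma Rmin_in_K1:
  assumes \<alpha>: "\<alpha> > 0" and xh: "xh \<in> Rmin A S nX u \<alpha> g"
  shows "xh \<in> K1" "nK xh powr (u - 1) \<le> 2 * M * norm (g - A xh) / \<alpha>"
proof -
  have rho: "rho A S nX u 1 xh \<le> ereal (2 * norm (g - A xh) / \<alpha>)"
    using Rmin_rho_le[OF linear normed_X _ \<alpha> xh] u_gt by simp
  then show "xh \<in> K1" using xh unfolding K1set_def Rmin_def by (auto intro: le_less_trans)
  then have "ereal (nK xh powr (u - 1)) \<le> ereal M * rho A S nX u 1 xh" by (rule nK_le_rho)
  also have "\<dots> \<le> ereal M * ereal (2 * norm (g - A xh) / \<alpha>)"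
    using rho M_ge by (intro ereal_mult_left_mono) auto
  finally show "nK xh powr (u - 1) \<le> 2 * M * norm (g - A xh) / \<alpha>" by (simp add: mult_ac)
qed

lemma residual_le_rescaled:
  assumes x: "interp_inf_norm K1 nK \<theta> x \<le> ereal \<rho>" and \<rho>: "\<rho> > 0"
    and s: "s > 0" and scale: "\<rho> * s powr \<theta> = \<delta>" and c: "c > 0"
    and data: "norm (g - A x) \<le> \<delta>" and \<alpha>: "\<alpha> > 0" and xh: "xh \<in> Rmin A S nX u \<alpha> g"
  shows "norm (g - A xh) \<le> \<delta> + 2 * M * c powr \<theta> * \<delta>
           + 3 * M * 2 powr (u - 1) * c powr ((\<theta> - 1) * (u - 1)) * (\<alpha> * (\<delta> / s) powr (u - 1))"
proof -
  have "2 * M * \<rho> * (c * s) powr \<theta> = 2 * M * c powr \<theta> * \<delta>"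
    by (simp add: mult.assoc powr_rescale(1)[OF s c \<rho> scale])
  moreover have "3 * \<alpha> * M * (2 * \<rho> * (c * s) powr \<theta> / (c * s)) powr (u - 1)
      = 3 * M * 2 powr (u - 1) * c powr ((\<theta> - 1) * (u - 1)) * (\<alpha> * (\<delta> / s) powr (u - 1))"
    unfolding powr_rescale(2)[OF s c \<rho> scale] by (simp add: mult_ac)
  moreover have "c * s > 0" using s c by simp
  ultimately show ?thesis using residual_le_interp[OF x \<rho> _ data \<alpha> xh, of "c * s"] by linarith
qed

lemma apriori_rule_residual_le:
  assumes x: "interp_inf_norm K1 nK \<theta> x \<le> ereal \<rho>" and \<rho>: "\<rho> > 0"
    and s: "s > 0" and scale: "\<rho> * s powr \<theta> = \<delta>"
    and data: "norm (g - A x) \<le> \<delta>" and \<alpha>: "\<alpha> > 0" and xh: "xh \<in> Rmin A S nX u \<alpha> g"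
    and rule: "\<alpha> * (\<delta> / s) powr (u - 1) \<le> cr * \<delta>"
  shows "norm (g - A xh) \<le> (1 + 2 * M + 3 * M * 2 powr (u - 1) * cr) * \<delta>"
proof -
  have "3 * M * 2 powr (u - 1) * (\<alpha> * (\<delta> / s) powr (u - 1)) \<le> 3 * M * 2 powr (u - 1) * (cr * \<delta>)"
    using rule M_ge by (intro mult_left_mono) auto
  then show ?thesis
    using residual_le_rescaled[OF x \<rho> s scale zero_less_one data \<alpha> xh] by (simp add: algebra_simps)
qed

text \<open>Under the discrepancy principle the residual is at least cD * \<delta>, while the
  residual bound at the scale \<kappa> * s makes the middle term at most (cD - 1) / 2 * \<delta>;
  the remaining term must absorb the gap, which bounds \<alpha> from below.\<close>

lemma discrepancy_rule_parameter_ge: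
  assumes x: "interp_inf_norm K1 nK \<theta> x \<le> ereal \<rho>" and \<rho>: "\<rho> > 0"
    and s: "s > 0" and scale: "\<rho> * s powr \<theta> = \<delta>" and \<delta>: "\<delta> > 0"
    and data: "norm (g - A x) \<le> \<delta>" and \<alpha>: "\<alpha> > 0" and xh: "xh \<in> Rmin A S nX u \<alpha> g"
    and \<kappa>: "\<kappa> > 0" "4 * M * \<kappa> powr \<theta> = cD - 1"
    and rule: "cD * \<delta> \<le> norm (g - A xh)"
  shows "(cD - 1) * \<delta> \<le> 6 * M * 2 powr (u - 1) * \<kappa> powr ((\<theta> - 1) * (u - 1)) * (\<alpha> * (\<delta> / s) powr (u - 1))"
proof -
  have "2 * M * \<kappa> powr \<theta> * \<delta> = (cD - 1) / 2 * \<delta>" by (simp add: \<kappa>(2)[symmetric])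
  then show ?thesis
    using residual_le_rescaled[OF x \<rho> s scale \<kappa>(1) data \<alpha> xh] rule by (simp add: algebra_simps)
qed

lemma parameter_choice_rules:
  assumes \<theta>: "\<theta> > 0" and cl: "cl > 0" "cr \<ge> cl" and cD: "cD > 1" "CD > cD"
  obtains cE cA where "cE > 0" "cA > 0"
    "\<And>x \<rho> \<delta> s g \<alpha> xh. interp_inf_norm K1 nK \<theta> x \<le> ereal \<rho> \<Longrightarrow> \<rho> > 0 \<Longrightarrow> \<delta> > 0 \<Longrightarrow>
      s > 0 \<Longrightarrow> \<rho> * s powr \<theta> = \<delta> \<Longrightarrow> norm (g - A x) \<le> \<delta> \<Longrightarrow> \<alpha> > 0 \<Longrightarrow>
      xh \<in> Rmin A S nX u \<alpha> g \<Longrightarrow>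
      (cl * \<delta> \<le> \<alpha> * (\<delta> / s) powr (u - 1) \<and> \<alpha> * (\<delta> / s) powr (u - 1) \<le> cr * \<delta>) \<or>
      (cD * \<delta> \<le> norm (g - A xh) \<and> norm (g - A xh) \<le> CD * \<delta>) \<Longrightarrow>
      norm (g - A xh) \<le> cE * \<delta> \<and> cA * \<delta> \<le> \<alpha> * (\<delta> / s) powr (u - 1)"
proof -
  define \<kappa> where "\<kappa> = ((cD - 1) / (4 * M)) powr (1 / \<theta>)"
  have \<kappa>: "\<kappa> > 0" "4 * M * \<kappa> powr \<theta> = cD - 1"
    using cD M_ge \<theta> by (auto simp: \<kappa>_def powr_powr)
  define B where "B = 6 * M * 2 powr (u - 1) * \<kappa> powr ((\<theta> - 1) * (u - 1))"
  have B: "B > 0" using M_ge \<kappa> by (simp add: B_def)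
  define cE where "cE = 1 + 2 * M + 3 * M * 2 powr (u - 1) * cr + CD"
  define cA where "cA = min cl ((cD - 1) / B)"
  have "3 * M * 2 powr (u - 1) * cr > 0" using M_ge cl by simp
  then have cE: "cE > 0" using M_ge cD unfolding cE_def by linarith
  have cA: "cA > 0" using cl cD B by (simp add: cA_def)
  show thesis
  proof (rule that[OF cE cA])
    fix x \<rho> \<delta> s g \<alpha> xh
    assume x: "interp_inf_norm K1 nK \<theta> x \<le> ereal \<rho>" and \<rho>: "\<rho> > 0" and \<delta>: "\<delta> > 0"
      and s: "s > 0" and scale: "\<rho> * s powr \<theta> = \<delta>" and data: "norm (g - A x) \<le> \<delta>"
      and \<alpha>: "\<alpha> > 0" and xh: "xh \<in> Rmin A S nX u \<alpha> g"
      and rules: "(cl * \<delta> \<le> \<alpha> * (\<delta> / s) powr (u - 1) \<and> \<alpha> * (\<delta> / s) powr (u - 1) \<le> cr * \<delta>) \<or>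
        (cD * \<delta> \<le> norm (g - A xh) \<and> norm (g - A xh) \<le> CD * \<delta>)"
    have parts_nonneg: "0 \<le> (2 * M + 3 * M * 2 powr (u - 1) * cr) * \<delta>" "0 \<le> CD * \<delta>"
      using M_ge cl cD \<delta> by auto
    have cE_split: "cE * \<delta> = \<delta> + (2 * M + 3 * M * 2 powr (u - 1) * cr) * \<delta> + CD * \<delta>"
      unfolding cE_def by (simp add: algebra_simps)
    from rules show "norm (g - A xh) \<le> cE * \<delta> \<and> cA * \<delta> \<le> \<alpha> * (\<delta> / s) powr (u - 1)"
    proof
      assume apriori: "cl * \<delta> \<le> \<alpha> * (\<delta> / s) powr (u - 1) \<and> \<alpha> * (\<delta> / s) powr (u - 1) \<le> cr * \<delta>"
      then have "norm (g - A xh) \<le> (1 + 2 * M + 3 * M * 2 powr (u - 1) * cr) * \<delta>"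
        using apriori_rule_residual_le[OF x \<rho> s scale data \<alpha> xh] by blast
      moreover have "cA * \<delta> \<le> cl * \<delta>" using \<delta> by (simp add: cA_def)
      ultimately show ?thesis using apriori parts_nonneg cE_split by (simp add: algebra_simps)
    next
      assume discrepancy: "cD * \<delta> \<le> norm (g - A xh) \<and> norm (g - A xh) \<le> CD * \<delta>"
      then have "(cD - 1) * \<delta> \<le> B * (\<alpha> * (\<delta> / s) powr (u - 1))"
        unfolding B_def using discrepancy_rule_parameter_ge[OF x \<rho> s scale \<delta> data \<alpha> xh \<kappa>] by blast
      then have "(cD - 1) / B * \<delta> \<le> \<alpha> * (\<delta> / s) powr (u - 1)"
        using B by (simp add: field_simps)
      moreover have "cA * \<delta> \<le> (cD - 1) / B * \<delta>" using \<delta> by (intro mult_right_mono) (auto simp: cA_def)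
      ultimately show ?thesis using discrepancy parts_nonneg cE_split \<delta> by linarith
    qed
  qed
qed

lemma nK_Rmin_le:
  assumes \<alpha>: "\<alpha> > 0" and xh: "xh \<in> Rmin A S nX u \<alpha> g" and \<delta>: "\<delta> > 0" and s: "s > 0"
    and cE: "cE \<ge> 0" and cA: "cA > 0"
    and residual: "norm (g - A xh) \<le> cE * \<delta>" and parameter: "cA * \<delta> \<le> \<alpha> * (\<delta> / s) powr (u - 1)"
  shows "nK xh \<le> (2 * M * cE / cA) powr (1 / (u - 1)) * (\<delta> / s)"
proof -
  have "nK xh powr (u - 1) \<le> 2 * M * norm (g - A xh) / \<alpha>" using Rmin_in_K1(2)[OF \<alpha> xh] .
  also have "\<dots> \<le> 2 * M * (cE * \<delta>) / \<alpha>"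
    using residual \<alpha> M_ge by (intro divide_right_mono mult_left_mono) auto
  also have "\<dots> = 2 * M * cE * (\<delta> / \<alpha>)" by simp
  also have "\<delta> / \<alpha> \<le> (\<delta> / s) powr (u - 1) / cA"
    using parameter \<alpha> cA by (simp add: field_simps mult.commute)
  then have "2 * M * cE * (\<delta> / \<alpha>) \<le> 2 * M * cE * ((\<delta> / s) powr (u - 1) / cA)"
    using cE M_ge by (intro mult_left_mono) auto
  also have "\<dots> = 2 * M * cE / cA * (\<delta> / s) powr (u - 1)" by simp
  finally show ?thesis
    using nK_nonneg[OF Rmin_in_K1(1)[OF \<alpha> xh]] \<delta> s cE cA M_ge u_gt
    by (intro powr_le_scaled_imp_le) auto
qed

lemma interp_q_integral_error_le:
  assumes Kq: "Kq \<ge> 1" "\<forall>v\<in>K1. \<forall>w\<in>K1. nK (v + w) \<le> Kq * (nK v + nK w)"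
    and \<xi>: "0 < \<xi>" "\<xi> < \<theta>" "\<theta> < 1"
    and x: "interp_inf_norm K1 nK \<theta> x \<le> ereal \<rho>" and \<rho>: "\<rho> > 0" and \<delta>: "\<delta> > 0"
    and s: "s > 0" and scale: "\<rho> * s powr \<theta> = \<delta>"
    and data: "norm (g - A x) \<le> \<delta>" and \<alpha>: "\<alpha> > 0" and xh: "xh \<in> Rmin A S nX u \<alpha> g"
    and cE: "cE \<ge> 0" and cA: "cA > 0"
    and residual: "norm (g - A xh) \<le> cE * \<delta>" and parameter: "cA * \<delta> \<le> \<alpha> * (\<delta> / s) powr (u - 1)"
  shows "interp_q_integral K1 nK \<xi> 1 (x - xh)
    \<le> ennreal ((Kq * (2 + (2 * M * cE / cA) powr (1 / (u - 1))) / (\<theta> - \<xi>) + M * (1 + cE) / \<xi>)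
               * (\<delta> * s powr (- \<xi>)))"
proof -
  define cN where "cN = (2 * M * cE / cA) powr (1 / (u - 1))"
  define a b where "a = Kq * (2 + cN) * \<rho>" and "b = M * (1 + cE) * \<delta>"
  have cN: "cN \<ge> 0" unfolding cN_def by simp
  have xhK: "xh \<in> K1" using Rmin_in_K1(1)[OF \<alpha> xh] .
  have N: "nK xh \<le> cN * (\<delta> / s)"
    unfolding cN_def using nK_Rmin_le[OF \<alpha> xh \<delta> s cE cA residual parameter] .
  have small: "Kfun K1 nK (x - xh) t \<le> a * t powr \<theta>" if t: "0 < t" "t \<le> s" for t
  proof -
    obtain z where z: "z \<in> K1" "norm (x - z) + t * nK z < 2 * \<rho> * t powr \<theta>"
      using interp_inf_norm_decomposition[OF x \<rho> t(1)] zero_in_K1 by blast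
    have "t * nK xh \<le> t * (cN * (\<delta> / s))" using N t by (intro mult_left_mono) auto
    also have "\<dots> = cN * \<rho> * (t * s powr (\<theta> - 1))"
      unfolding scale[symmetric] using s by (simp add: powr_diff field_simps)
    also have "\<dots> \<le> cN * \<rho> * t powr \<theta>"
      using mult_powr_le_powr[OF t, of \<theta>] \<xi> \<rho> cN by (intro mult_left_mono) auto
    finally have "Kq * (norm (x - z) + t * nK z + t * nK xh) \<le> Kq * (2 * \<rho> * t powr \<theta> + cN * \<rho> * t powr \<theta>)"
      using z(2) Kq(1) by (intro mult_left_mono) auto
    moreover have "Kfun K1 nK (x - xh) t \<le> Kq * (norm (x - z) + t * nK z + t * nK xh)"
      using Kfun_diff_le[OF quasi_normed_K1 Kq xhK z(1)] t by simp
    ultimately show ?thesis unfolding a_def by (simp add: algebra_simps)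
  qed
  have large: "Kfun K1 nK (x - xh) t \<le> b" if "t > s" for t
  proof -
    have "Kfun K1 nK (x - xh) t \<le> norm (x - xh)"
      using Kfun_le[OF zero_in_K1, of nK t "x - xh"] nK_nonneg nK_zero that s by simp
    also have "\<dots> \<le> M * norm (A x - A xh)"
      using norm_le_A[of "x - xh"] linear by (simp add: linear_diff)
    also have "norm (A x - A xh) \<le> norm (g - A xh) + norm (g - A x)"
      using norm_triangle_ineq4[of "g - A xh" "g - A x"] by simp
    then have "M * norm (A x - A xh) \<le> M * (cE * \<delta> + \<delta>)"
      using data residual M_ge by (intro mult_left_mono) auto
    also have "\<dots> = b" unfolding b_def by (simp add: algebra_simps)
    finally show ?thesis .
  qed
  have "interp_q_integral K1 nK \<xi> 1 (x - xh) \<le> ennreal (a * s powr (\<theta> - \<xi>) / (\<theta> - \<xi>) + b * s powr (- \<xi>) / \<xi>)"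
  proof (rule interp_q_integral_le[OF _ small large s \<xi>(1,2)])
    show "0 \<le> Kfun K1 nK (x - xh) t" if "t > 0" for t
      using Kfun_nonneg[of K1 nK t] zero_in_K1 nK_nonneg that by auto
    show "a \<ge> 0" "b \<ge> 0" unfolding a_def b_def using Kq(1) cN \<rho> cE M_ge \<delta> by auto
  qed
  also have "a * s powr (\<theta> - \<xi>) = Kq * (2 + cN) * (\<delta> * s powr (- \<xi>))"
    unfolding a_def scale[symmetric] using s by (simp add: powr_diff powr_minus field_simps)
  also have "b = M * (1 + cE) * \<delta>" by (rule b_def)
  finally show ?thesis unfolding cN_def by (simp add: algebra_simps add_divide_distrib)
qed

lemma convergence_rate:
  assumes \<xi>: "0 < \<xi>" "\<xi> < \<theta>" "\<theta> < 1" and cl: "cl > 0" "cr \<ge> cl" and cD: "cD > 1" "CD > cD"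
    and emb: "\<forall>y \<in> interp_q_space K1 nK \<xi> 1. y \<in> L \<and> nL y \<le> cL * interp_q_norm K1 nK \<xi> 1 y"
  shows "\<exists>C>0. \<forall>x \<delta> \<rho> g \<alpha> xh.
    \<delta> > 0 \<and> \<rho> > 0 \<and> interp_inf_norm K1 nK \<theta> x \<le> ereal \<rho> \<and>
    norm (g - A x) \<le> \<delta> \<and> \<alpha> > 0 \<and> xh \<in> Rmin A S nX u \<alpha> g \<and>
    ((cl * \<rho> powr (- (u - 1) / \<theta>) * \<delta> powr (((1 - \<theta>) * (u - 1) + \<theta>) / \<theta>) \<le> \<alpha> \<and>
      \<alpha> \<le> cr * \<rho> powr (- (u - 1) / \<theta>) * \<delta> powr (((1 - \<theta>) * (u - 1) + \<theta>) / \<theta>))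
     \<or> (cD * \<delta> \<le> norm (g - A xh) \<and> norm (g - A xh) \<le> CD * \<delta>))
    \<longrightarrow> x - xh \<in> L \<and> nL (x - xh) \<le> C * \<rho> powr (\<xi> / \<theta>) * \<delta> powr (1 - \<xi> / \<theta>)"
proof -
  have \<theta>: "\<theta> > 0" using \<xi> by simp
  obtain Kq where Kq: "Kq \<ge> 1" "\<forall>v\<in>K1. \<forall>w\<in>K1. nK (v + w) \<le> Kq * (nK v + nK w)"
    using quasi_normed_K1 unfolding quasi_normed_subspace_def by (elim conjE exE) blast
  obtain cE cA where cE: "cE > 0" and cA: "cA > 0" and rules: "\<And>x \<rho> \<delta> s g \<alpha> xh.
      interp_inf_norm K1 nK \<theta> x \<le> ereal \<rho> \<Longrightarrow> \<rho> > 0 \<Longrightarrow> \<delta> > 0 \<Longrightarrow> s > 0 \<Longrightarrow> \<rho> * s powr \<theta> = \<delta> \<Longrightarrow>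
      norm (g - A x) \<le> \<delta> \<Longrightarrow> \<alpha> > 0 \<Longrightarrow> xh \<in> Rmin A S nX u \<alpha> g \<Longrightarrow>
      (cl * \<delta> \<le> \<alpha> * (\<delta> / s) powr (u - 1) \<and> \<alpha> * (\<delta> / s) powr (u - 1) \<le> cr * \<delta>) \<or>
      (cD * \<delta> \<le> norm (g - A xh) \<and> norm (g - A xh) \<le> CD * \<delta>) \<Longrightarrow>
      norm (g - A xh) \<le> cE * \<delta> \<and> cA * \<delta> \<le> \<alpha> * (\<delta> / s) powr (u - 1)"
    by (rule parameter_choice_rules[OF \<theta> cl cD]) (rule that)
  define C where "C = Kq * (2 + (2 * M * cE / cA) powr (1 / (u - 1))) / (\<theta> - \<xi>) + M * (1 + cE) / \<xi>"
  have C: "C > 0" unfolding C_def using Kq(1) M_ge cE \<xi> by (simp add: add_pos_pos add_pos_nonneg)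
  have "x - xh \<in> L \<and> nL (x - xh) \<le> max cL 1 * C * \<rho> powr (\<xi> / \<theta>) * \<delta> powr (1 - \<xi> / \<theta>)"
    if \<delta>: "\<delta> > 0" and \<rho>: "\<rho> > 0" and x: "interp_inf_norm K1 nK \<theta> x \<le> ereal \<rho>"
      and data: "norm (g - A x) \<le> \<delta>" and \<alpha>: "\<alpha> > 0" and xh: "xh \<in> Rmin A S nX u \<alpha> g"
      and choice: "(cl * \<rho> powr (- (u - 1) / \<theta>) * \<delta> powr (((1 - \<theta>) * (u - 1) + \<theta>) / \<theta>) \<le> \<alpha> \<and>
        \<alpha> \<le> cr * \<rho> powr (- (u - 1) / \<theta>) * \<delta> powr (((1 - \<theta>) * (u - 1) + \<theta>) / \<theta>))
       \<or> (cD * \<delta> \<le> norm (g - A xh) \<and> norm (g - A xh) \<le> CD * \<delta>)"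
    for x \<delta> \<rho> g \<alpha> xh
  proof -
    define s where "s = (\<delta> / \<rho>) powr (1 / \<theta>)"
    note scale = scale_powr_identities[OF \<rho> \<delta> \<theta> s_def]
    have "norm (g - A xh) \<le> cE * \<delta> \<and> cA * \<delta> \<le> \<alpha> * (\<delta> / s) powr (u - 1)"
      using rules[OF x \<rho> \<delta> scale(1,2) data \<alpha> xh] choice unfolding scale(3,4) by blast
    then have "interp_q_integral K1 nK \<xi> 1 (x - xh) \<le> ennreal (C * (\<rho> powr (\<xi> / \<theta>) * \<delta> powr (1 - \<xi> / \<theta>)))"
      using interp_q_integral_error_le[OF Kq \<xi> x \<rho> \<delta> scale(1,2) data \<alpha> xh] cE cA
      unfolding C_def scale(5) by simp
    from interp_q_embedding_le[OF emb this] show ?thesis using C by (simp add: mult.assoc)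
  qed
  then show ?thesis using C by (intro exI[of _ "max cL 1 * C"]) auto
qed

end

theorem theorem2:
  fixes A :: "'a::banach \<Rightarrow> 'y::{real_inner, complete_space}"
    and S :: "'a set" and nX :: "'a \<Rightarrow> real"
    and M u :: real
    and nK :: "'a \<Rightarrow> real"
    and L :: "'a set" and nL :: "'a \<Rightarrow> real"
    and \<xi> \<theta> cl cr cD CD :: real
  assumes A_lin: "bounded_linear A"
    and M_ge: "M \<ge> 1"
    and A_equiv: "\<forall>x. norm x / M \<le> norm (A x) \<and> norm (A x) \<le> M * norm x"
    and X_banach: "banach_subspace S nX"
    and X_emb: "\<exists>c. \<forall>x\<in>S. norm x \<le> c * nX x"
    and X_dense: "closure S = UNIV"
    and u_gt: "u > 1"
    and tau: "\<exists>\<tau>. lc_vector_topology S \<tau> \<and>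
                 (\<forall>c. compactin \<tau> {x \<in> S. Rpen nX u x \<le> c}) \<and>
                 (\<forall>z. continuous_map \<tau> euclideanreal (\<lambda>x. inner (A x) z))"
    and K1_qb: "quasi_banach_subspace (K1set A S nX u) nK"
    and K1_equiv: "\<forall>x \<in> K1set A S nX u.
                     rho A S nX u 1 x \<le> ereal M * ereal (nK x powr (u - 1)) \<and>
                     ereal (nK x powr (u - 1)) \<le> ereal M * rho A S nX u 1 x"
    and L_banach: "banach_subspace L nL"
    and L_emb: "\<exists>c. \<forall>x\<in>L. norm x \<le> c * nL x"
    and xi_pos: "0 < \<xi>" and xi_theta: "\<xi> < \<theta>" and theta_lt: "\<theta> < 1"
    and cl_pos: "cl > 0" and cr_cl: "cr \<ge> cl"
    and cD_gt: "cD > 1" and CD_cD: "CD > cD"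
    and interp_emb: "\<exists>c. \<forall>x \<in> interp_q_space (K1set A S nX u) nK \<xi> 1.
                        x \<in> L \<and> nL x \<le> c * interp_q_norm (K1set A S nX u) nK \<xi> 1 x"
  shows "\<exists>C>0. \<forall>x \<delta> rr g \<alpha> xh.
           x \<in> S \<and> \<delta> > 0 \<and> rr > 0 \<and>
           interp_inf_norm (K1set A S nX u) nK \<theta> x \<le> ereal rr \<and>
           norm (g - A x) \<le> \<delta> \<and> \<alpha> > 0 \<and> xh \<in> Rmin A S nX u \<alpha> g \<and>
           ((cl * rr powr (- (u - 1) / \<theta>) * \<delta> powr (((1 - \<theta>) * (u - 1) + \<theta>) / \<theta>) \<le> \<alpha> \<and>
             \<alpha> \<le> cr * rr powr (- (u - 1) / \<theta>) * \<delta> powr (((1 - \<theta>) * (u - 1) + \<theta>) / \<theta>))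
            \<or> (cD * \<delta> \<le> norm (g - A xh) \<and> norm (g - A xh) \<le> CD * \<delta>))
           \<longrightarrow> x - xh \<in> L \<and> nL (x - xh) \<le> C * rr powr (\<xi> / \<theta>) * \<delta> powr (1 - \<xi> / \<theta>)"
proof -
  obtain \<tau> where \<tau>: "lc_vector_topology S \<tau>" "\<And>c. compactin \<tau> {x \<in> S. Rpen nX u x \<le> c}"
    "\<And>z. continuous_map \<tau> euclideanreal (\<lambda>x. inner (A x) z)" using tau by blast
  have X: "normed_subspace S nX" using X_banach by (simp add: banach_subspace_def)
  have K1: "quasi_normed_subspace (K1set A S nX u) nK" using K1_qb by (simp add: quasi_banach_subspace_def)
  interpret tikhonov_setting A S nX u M nK
  proof (rule tikhonov_setting.intro)
    show "linear A" using A_lin by (rule bounded_linear.linear)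
    show "norm x \<le> M * norm (A x)" for x using A_equiv M_ge by (simp add: divide_le_eq mult.commute)
    show "Rmin A S nX u \<alpha> h \<noteq> {}" if "\<alpha> > 0" for \<alpha> h
      using Rmin_nonempty[OF _ X _ that \<tau>] A_lin u_gt by (simp add: bounded_linear.linear)
    show "rho A S nX u 1 x \<le> ereal (M * nK x powr (u - 1))" if "x \<in> K1set A S nX u" for x
      using K1_equiv that by simp
    show "ereal (nK x powr (u - 1)) \<le> ereal M * rho A S nX u 1 x" if "x \<in> K1set A S nX u" for x
      using K1_equiv that by blast
  qed (use M_ge A_equiv X u_gt K1 in simp_all)
  obtain cL where "\<forall>y \<in> interp_q_space K1 nK \<xi> 1. y \<in> L \<and> nL y \<le> cL * interp_q_norm K1 nK \<xi> 1 y"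
    using interp_emb by blast
  from convergence_rate[OF xi_pos xi_theta theta_lt cl_pos cr_cl cD_gt CD_cD this]
  show ?thesis by blast
qed

end
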